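(* Let $\Psi : H^*(SU(3)/T_{SU(3)};\mathbb{C})\to H^*(SU(3)/T_{SU(3)};\mathbb{C})$ be a ring homomorphism. Then there exist $\omega_1,\omega_2\in W$ such that $\omega_1\circ \Psi\circ \omega_2$ is represented by either $\lambda\cdot \left(\begin{smallmatrix} 1 & 0\\ 0 & 1\end{smallmatrix}\right)$ with $\lambda\in\mathbb{C}^*$, or by $\lambda\cdot \left(\begin{smallmatrix} 1 & \varsigma\\ 0 & 0\end{smallmatrix}\right)$ with $\lambda\in\mathbb{C}$, where $\varsigma$ satisfies $\varsigma^2+\varsigma+1=0$.
   Context: $T_{SU(3)}$ denotes the standard maximal torus of $SU(3)$ (unitary diagonal matrices of determinant one), and $SU(3)/T_{SU(3)}$ is the six-dimensional complex flag manifold. Its complex cohomology is identified with $\mathbb{C}[x_1,x_2]/(x_1^2+x_2^2+x_1 x_2,\; x_1^2 x_2+x_1 x_2^2)$, where $x_1,x_2,x_3$ are the standard generators of $H^*(BT_{U(3)};\mathbb{Z})=\mathbb{Z}[x_1,x_2,x_3]$ (so $x_1^3=x_2^3=x_1^2x_2^2=0$ in this ring). Any ring endomorphism of $H^*(SU(3)/T_{SU(3)};\mathbb{C})$ is determined by its restriction to $H^2(SU(3)/T_{SU(3)};\mathbb{C})$, and "represented by a matrix" refers to the matrix $\left(\begin{smallmatrix} a_{11} & a_{12}\\ a_{21} & a_{22}\end{smallmatrix}\right)$ of this restriction with respect to the basis $(x_1,x_2)$. $W\cong S_3$ is the Weyl group of $U(3)$ (equivalently $N(T_{SU(3)})/T_{SU(3)}$),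 acting on the cohomology of $SU(3)/T_{SU(3)}$ via permutation of $x_1,x_2,x_3$; the permutations $(1),(12),(13),(23),(123),(321)$ act on $H^2$ by the matrices $\left(\begin{smallmatrix} 1&0\\0&1\end{smallmatrix}\right)$, $\left(\begin{smallmatrix} 0&1\\1&0\end{smallmatrix}\right)$, $\left(\begin{smallmatrix} -1&0\\-1&1\end{smallmatrix}\right)$, $\left(\begin{smallmatrix} 1&-1\\0&-1\end{smallmatrix}\right)$, $\left(\begin{smallmatrix} 0&-1\\1&-1\end{smallmatrix}\right)$, $\left(\begin{smallmatrix} -1&1\\-1&0\end{smallmatrix}\right)$ respectively. $W$ acts on ring endomorphisms by pre- and post-composition. *)

theory Defs
  imports "HOL-Analysis.Analysis"
begin

text \<open>The complex cohomology ring H = C[x1,x2]/(x1^2+x2^2+x1 x2, x1^2 x2 + x1 x2^2)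
  of SU(3)/T, as a 6-dimensional commutative C-algebra.  An element
  Coh c0 c1 c2 c3 c4 c5 stands for
  c0 + c1 x1 + c2 x2 + c3 x1^2 + c4 x1 x2 + c5 x1^2 x2
  (a basis of the quotient; the relations give x2^2 = - x1^2 - x1 x2,
  x1^3 = x2^3 = 0, x1 x2^2 = - x1^2 x2, x1^2 x2^2 = 0).\<close>

datatype coh = Coh complex complex complex complex complex complex

fun coh_add :: "coh \<Rightarrow> coh \<Rightarrow> coh" where
  "coh_add (Coh a0 a1 a2 a3 a4 a5) (Coh b0 b1 b2 b3 b4 b5) =
     Coh (a0 + b0) (a1 + b1) (a2 + b2) (a3 + b3) (a4 + b4) (a5 + b5)"

fun coh_scale :: "complex \<Rightarrow> coh \<Rightarrow> coh" where
  "coh_scale c (Coh a0 a1 a2 a3 a4 a5) =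
     Coh (c * a0) (c * a1) (c * a2) (c * a3) (c * a4) (c * a5)"

fun coh_mult :: "coh \<Rightarrow> coh \<Rightarrow> coh" where
  "coh_mult (Coh a0 a1 a2 a3 a4 a5) (Coh b0 b1 b2 b3 b4 b5) =
     Coh (a0 * b0)
         (a0 * b1 + a1 * b0)
         (a0 * b2 + a2 * b0)
         (a0 * b3 + a3 * b0 + a1 * b1 - a2 * b2)
         (a0 * b4 + a4 * b0 + a1 * b2 + a2 * b1 - a2 * b2)
         (a0 * b5 + a5 * b0 + a1 * b4 + a4 * b1 + a2 * b3 + a3 * b2 - a2 * b4 - a4 * b2)"

definition coh_one :: coh where "coh_one = Coh 1 0 0 0 0 0"
definition coh_x1 :: coh where "coh_x1 = Coh 0 1 0 0 0 0"
definition coh_x2 :: coh where "coh_x2 = Coh 0 0 1 0 0 0"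

definition coh_ring_endo :: "(coh \<Rightarrow> coh) \<Rightarrow> bool" where
  "coh_ring_endo \<Psi> \<longleftrightarrow>
     (\<forall>a b. \<Psi> (coh_add a b) = coh_add (\<Psi> a) (\<Psi> b)) \<and>
     (\<forall>c a. \<Psi> (coh_scale c a) = coh_scale c (\<Psi> a)) \<and>
     (\<forall>a b. \<Psi> (coh_mult a b) = coh_mult (\<Psi> a) (\<Psi> b)) \<and>
     \<Psi> coh_one = coh_one"

definition mat2 :: "complex \<Rightarrow> complex \<Rightarrow> complex \<Rightarrow> complex \<Rightarrow> complex^2^2" where
  "mat2 a b c d = (\<chi> i j. if i = 1 then (if j = 1 then a else b)
                              else (if j = 1 then c else d))"

definition represented_by :: "(coh \<Rightarrow> coh) \<Rightarrow> complex^2^2 \<Rightarrow> bool" where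
  "represented_by \<Psi> A \<longleftrightarrow>
     \<Psi> coh_x1 = coh_add (coh_scale (A$1$1) coh_x1) (coh_scale (A$2$1) coh_x2) \<and>
     \<Psi> coh_x2 = coh_add (coh_scale (A$1$2) coh_x1) (coh_scale (A$2$2) coh_x2)"

text \<open>The Weyl group W = S_3 acting on H^2, via the matrices of (1),(12),(13),(23),(123),(321).\<close>
definition weyl_mats :: "(complex^2^2) set" where
  "weyl_mats = {mat2 1 0 0 1, mat2 0 1 1 0, mat2 (-1) 0 (-1) 1,
                mat2 1 (-1) 0 (-1), mat2 0 (-1) 1 (-1), mat2 (-1) 1 (-1) 0}"

end

theory Submission
  imports Defs
begin

text \<open>Since \<Psi> kills the relations,
  it carries q = x1^2 + x1 x2 + x2^2 = (x1 - w x2)(x1 - w^2 x2), w a primitive cube root of unity,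
  to a multiple of itself.  So the substitution either preserves or swaps the two linear factors
  of q, making A a combination of the identity and a 3-cycle, or of reflections; or it kills one
  factor, making the rows of A proportional to (1, s) with s^2 + s + 1 = 0.  The cubic relation
  x1 x2 (x1 + x2) = 0 cuts each family down to three lines of matrices that W permutes, and
  multiplying by a suitable Weyl matrix on the left gives one of the two normal forms.\<close>

lemma mat2_mult:
  "mat2 a b c d ** mat2 e f g h = mat2 (a*e + b*g) (a*f + b*h) (c*e + d*g) (c*f + d*h)"
  unfolding matrix_matrix_mult_def mat2_def by (simp add: vec_eq_iff forall_2 sum_2)

lemma mat2_eq_iff: "mat2 a b c d = mat2 e f g h \<longleftrightarrow> a = e \<and> b = f \<and> c = g \<and> d = h"
  unfolding mat2_def by (auto simp: vec_eq_iff forall_2)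

lemma mat2_entries: "(A::complex^2^2) = mat2 (A$1$1) (A$1$2) (A$2$1) (A$2$2)"
  unfolding mat2_def by (simp add: vec_eq_iff forall_2)

lemma mat2_identity: "mat2 1 0 0 1 = mat 1"
  unfolding mat2_def mat_def by (simp add: vec_eq_iff forall_2)

lemma weyl_mats_elements:
  "mat2 1 0 0 1 \<in> weyl_mats" "mat2 0 1 1 0 \<in> weyl_mats" "mat2 (-1) 0 (-1) 1 \<in> weyl_mats"
  "mat2 1 (-1) 0 (-1) \<in> weyl_mats" "mat2 0 (-1) 1 (-1) \<in> weyl_mats" "mat2 (-1) 1 (-1) 0 \<in> weyl_mats"
  by (simp_all add: weyl_mats_def)

lemma weyl_mats_mult_closed:
  assumes "w \<in> weyl_mats" "v \<in> weyl_mats"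
  shows "w ** v \<in> weyl_mats"
  using assms unfolding weyl_mats_def by (auto simp: mat2_mult mat2_eq_iff)

lemma primitive_cube_root_exists: "\<exists>s::complex. s^2 + s + 1 = 0"
  by (rule exI[of _ "Complex (-1/2) (sqrt 3 / 2)"]) (simp add: complex_eq_iff power2_eq_square)

definition coh_zero :: coh where "coh_zero = Coh 0 0 0 0 0 0"

definition coh_quad :: "coh \<Rightarrow> coh \<Rightarrow> coh" where
  "coh_quad u v = coh_add (coh_mult u u) (coh_add (coh_mult u v) (coh_mult v v))"

definition coh_cubic :: "coh \<Rightarrow> coh \<Rightarrow> coh" where
  "coh_cubic u v = coh_add (coh_mult (coh_mult u u) v) (coh_mult u (coh_mult v v))"

lemma coh_quad_generators: "coh_quad coh_x1 coh_x2 = coh_zero"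
  and coh_cubic_generators: "coh_cubic coh_x1 coh_x2 = coh_zero"
  by (simp_all add: coh_quad_def coh_cubic_def coh_x1_def coh_x2_def coh_zero_def)

lemma coh_ring_endo_zero:
  assumes "coh_ring_endo \<Psi>"
  shows "\<Psi> coh_zero = coh_zero"
proof -
  have "\<Psi> coh_zero = \<Psi> (coh_scale 0 coh_one)" by (simp add: coh_one_def coh_zero_def)
  also have "\<dots> = coh_scale 0 coh_one" using assms by (simp add: coh_ring_endo_def)
  also have "\<dots> = coh_zero" by (simp add: coh_one_def coh_zero_def)
  finally show ?thesis .
qed

lemma coh_ring_endo_quad: "coh_ring_endo \<Psi> \<Longrightarrow> \<Psi> (coh_quad u v) = coh_quad (\<Psi> u) (\<Psi> v)"
  and coh_ring_endo_cubic: "coh_ring_endo \<Psi> \<Longrightarrow> \<Psi> (coh_cubic u v) = coh_cubic (\<Psi> u) (\<Psi> v)"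
  by (simp_all add: coh_ring_endo_def coh_quad_def coh_cubic_def)

lemma coh_quad_degree_two:
  "coh_quad (Coh 0 a c 0 0 0) (Coh 0 b d 0 0 0) = coh_zero \<longleftrightarrow>
     a^2 - c^2 + a*b - c*d + b^2 - d^2 = 0 \<and>
     2*a*c - c^2 + a*d + b*c - c*d + 2*b*d - d^2 = 0"
  by (simp add: coh_quad_def coh_zero_def power2_eq_square algebra_simps)

lemma coh_cubic_degree_two:
  "coh_cubic (Coh 0 a c 0 0 0) (Coh 0 b d 0 0 0) = coh_zero \<longleftrightarrow>
     (a^2 - c^2)*d + (2*a*c - c^2)*(b - d) + (a*b - c*d)*d + (a*d + b*c - c*d)*(b - d) = 0"
  by (simp add: coh_cubic_def coh_zero_def power2_eq_square algebra_simps)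

lemma quad_relation_cases:
  fixes a b c d :: complex
  assumes E1: "a^2 - c^2 + a*b - c*d + b^2 - d^2 = 0"
    and E2: "2*a*c - c^2 + a*d + b*c - c*d + 2*b*d - d^2 = 0"
  shows "(c = -b \<and> d = a + b) \<or> (c = a + b \<and> d = -a) \<or>
         (\<exists>s. s^2 + s + 1 = 0 \<and> b = a * s \<and> d = c * s)"
proof -
  obtain w :: complex where w: "w^2 + w + 1 = 0" using primitive_cube_root_exists by blast
  have w2: "(w^2)^2 + w^2 + 1 = 0" using w by algebra
  \<comment> \<open>q \<circ> A at the zeros (w^2, 1) and (w, 1) of q, split along q = (x1 - w x2)(x1 - w^2 x2).\<close>
  have "(w^2*a - b + c - w*d) * (w^2*a - w*b + c - w^2*d) = 0"
   and "(w*a - w^2*b + c - w*d) * (w*a - b + c - w^2*d) = 0"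
    using E1 E2 w by algebra+
  then consider
      "w^2*a - w*b + c - w^2*d = 0" "w*a - w^2*b + c - w*d = 0"
    | "w^2*a - b + c - w*d = 0" "w*a - b + c - w^2*d = 0"
    | "w^2*a - b + c - w*d = 0" "w*a - w^2*b + c - w*d = 0"
    | "w^2*a - w*b + c - w^2*d = 0" "w*a - b + c - w^2*d = 0"
    by auto
  then show ?thesis
  proof cases
    case 1
    then have "c = -b \<and> d = a + b" using w by algebra
    then show ?thesis by blast
  next
    case 2
    then have "c = a + b \<and> d = -a" using w by algebra
    then show ?thesis by blast
  next
    case 3
    then have "b = a*w^2 \<and> d = c*w^2" using w by algebra
    then show ?thesis using w2 by blast
  next
    case 4
    then have "b = a*w \<and> d = c*w" using w by algebra
    then show ?thesis using w by blast
  qed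
qed

lemma relations_cases:
  fixes a b c d :: complex
  assumes "a^2 - c^2 + a*b - c*d + b^2 - d^2 = 0"
    and "2*a*c - c^2 + a*d + b*c - c*d + 2*b*d - d^2 = 0"
    and E3: "(a^2 - c^2)*d + (2*a*c - c^2)*(b - d) + (a*b - c*d)*d + (a*d + b*c - c*d)*(b - d) = 0"
  obtains "c = -b" "d = a + b" "a*b*(a + b) = 0"
    | "c = a + b" "d = -a" "a*b*(a + b) = 0"
    | s where "s^2 + s + 1 = 0" "b = a * s" "d = c * s" "a*c*(a - c) = 0"
proof -
  from quad_relation_cases[OF assms(1,2)] consider
      "c = -b" "d = a + b" | "c = a + b" "d = -a" | s where "s^2 + s + 1 = 0" "b = a * s" "d = c * s"
    by blast
  then show thesis
  proof cases
    case 1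
    with E3 have "a*b*(a + b) = 0" by algebra
    with 1 that(1) show thesis by blast
  next
    case 2
    with E3 have "a*b*(a + b) = 0" by algebra
    with 2 that(2) show thesis by blast
  next
    case (3 s)
    with E3 have "a*c*(a - c) = 0" by algebra
    with 3 that(3) show thesis by blast
  qed
qed

definition weyl_normal_form :: "complex^2^2 \<Rightarrow> bool" where
  "weyl_normal_form B \<longleftrightarrow>
     (\<exists>l. l \<noteq> 0 \<and> B = mat2 l 0 0 l) \<or> (\<exists>l s. s^2 + s + 1 = 0 \<and> B = mat2 l (l * s) 0 0)"

lemma weyl_normal_form_scalar: "weyl_normal_form (mat2 l 0 0 l)"
proof (cases "l = 0")
  case True
  obtain s :: complex where s: "s^2 + s + 1 = 0" using primitive_cube_root_exists by blast
  from True have "mat2 l 0 0 l = mat2 l (l * s) 0 0" by simp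
  with s show ?thesis unfolding weyl_normal_form_def by blast
next
  case False
  then show ?thesis unfolding weyl_normal_form_def by blast
qed

lemma weyl_normalize_cyclic:
  assumes "a*b*(a + b) = 0"
  shows "\<exists>w\<in>weyl_mats. weyl_normal_form (w ** mat2 a b (-b) (a + b))"
proof -
  from assms consider "b = 0" | "a = 0" | "b = -a" by (auto simp: add_eq_0_iff)
  then show ?thesis
  proof cases
    case 1
    show ?thesis
      by (rule bexI[OF _ weyl_mats_elements(1)]) (simp add: 1 mat2_mult weyl_normal_form_scalar)
  next
    case 2
    show ?thesis
      by (rule bexI[OF _ weyl_mats_elements(6)]) (simp add: 2 mat2_mult weyl_normal_form_scalar)
  next
    case 3
    show ?thesis
      by (rule bexI[OF _ weyl_mats_elements(5)]) (simp add: 3 mat2_mult weyl_normal_form_scalar)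
  qed
qed

lemma weyl_normalize_reflected:
  assumes "a*b*(a + b) = 0"
  shows "\<exists>w\<in>weyl_mats. weyl_normal_form (w ** mat2 a b (a + b) (- a))"
proof -
  let ?swap = "mat2 0 1 1 0"
  have "(a + b) * (- a) * ((a + b) + (- a)) = 0" using assms by algebra
  from weyl_normalize_cyclic[OF this]
  have "\<exists>w\<in>weyl_mats. weyl_normal_form (w ** mat2 (a + b) (- a) a b)" by simp
  then obtain w where w: "w \<in> weyl_mats" "weyl_normal_form (w ** mat2 (a + b) (- a) a b)"
    by blast
  from w(1) weyl_mats_elements(2) have "w ** ?swap \<in> weyl_mats" by (rule weyl_mats_mult_closed)
  moreover have "(w ** ?swap) ** mat2 a b (a + b) (- a) = w ** mat2 (a + b) (- a) a b"
    by (simp add: mat2_mult flip: matrix_mul_assoc)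
  ultimately show ?thesis using w(2) by metis
qed

lemma weyl_normalize_rank_one:
  assumes s: "s^2 + s + 1 = 0" and "a*c*(a - c) = 0"
  shows "\<exists>w\<in>weyl_mats. weyl_normal_form (w ** mat2 a (a * s) c (c * s))"
proof -
  have normal: "weyl_normal_form (mat2 l (l * s) 0 0)" for l
    using s unfolding weyl_normal_form_def by blast
  from assms(2) consider "a = 0" | "c = 0" | "a = c" by auto
  then show ?thesis
  proof cases
    case 1
    show ?thesis
      by (rule bexI[OF _ weyl_mats_elements(2)]) (simp add: 1 mat2_mult normal)
  next
    case 2
    show ?thesis
      by (rule bexI[OF _ weyl_mats_elements(1)]) (simp add: 2 mat2_mult normal)
  next
    case 3
    show ?thesis
      by (rule bexI[OF _ weyl_mats_elements(5)]) (simp add: 3 mat2_mult normal[of "- c", simplified])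
  qed
qed

theorem lemma3p7:
  fixes \<Psi> :: "coh \<Rightarrow> coh" and A :: "complex^2^2"
  assumes "coh_ring_endo \<Psi>"
    and "represented_by \<Psi> A"
  shows "\<exists>w1\<in>weyl_mats. \<exists>w2\<in>weyl_mats.
           (\<exists>l::complex. l \<noteq> 0 \<and> w1 ** A ** w2 = mat2 l 0 0 l) \<or>
           (\<exists>l s::complex. s^2 + s + 1 = 0 \<and> w1 ** A ** w2 = mat2 l (l * s) 0 0)"
proof -
  define a b c d where "a = A$1$1" and "b = A$1$2" and "c = A$2$1" and "d = A$2$2"
  have A: "A = mat2 a b c d" unfolding a_def b_def c_def d_def by (rule mat2_entries)
  have images: "\<Psi> coh_x1 = Coh 0 a c 0 0 0" "\<Psi> coh_x2 = Coh 0 b d 0 0 0"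
    using assms(2) unfolding represented_by_def a_def b_def c_def d_def
    by (simp_all add: coh_x1_def coh_x2_def)
  have "coh_quad (\<Psi> coh_x1) (\<Psi> coh_x2) = coh_zero" "coh_cubic (\<Psi> coh_x1) (\<Psi> coh_x2) = coh_zero"
    using assms(1) coh_quad_generators coh_cubic_generators
    by (metis coh_ring_endo_zero coh_ring_endo_quad coh_ring_endo_cubic)+
  then have "\<exists>w\<in>weyl_mats. weyl_normal_form (w ** A)"
    unfolding images coh_quad_degree_two coh_cubic_degree_two A
    by (elim conjE relations_cases)
       (simp_all add: weyl_normalize_cyclic weyl_normalize_reflected weyl_normalize_rank_one)
  then obtain w where "w \<in> weyl_mats" "weyl_normal_form (w ** A ** mat2 1 0 0 1)"
    by (auto simp: mat2_identity)
  with weyl_mats_elements(1) show ?thesis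
    unfolding weyl_normal_form_def[symmetric] by blast
qed

end
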